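(* Let $\mathbf C$ be a finite dimensional clone $\tau$-algebra. Then: (i) the $\rho_{\mathbf C}$-algebra $\mathbf R_{\mathbf C}$ is isomorphic to the free $\rho_{\mathbf C}$-algebra over a countably infinite set of generators in the variety $\mathrm{Var}(\mathbf R_{\mathbf C})$ generated by $\mathbf R_{\mathbf C}$; (ii) the clone $\rho_{\mathbf C}$-algebra $\overline{\mathbf R}_{\mathbf C}$ is isomorphic to the clone $\mathrm{Var}(\mathbf R_{\mathbf C})$-algebra.
   Context: A clone $\tau$-algebra is an algebra $\mathbf C=(C,\sigma^{\mathbf C}\ (\sigma\in\tau),q_n^{\mathbf C}\ (n\ge0),\mathsf e_i^{\mathbf C}\ (i\ge1))$ with $\mathsf e_i$ nullary, $q_n$ of arity $n+1$, satisfying: (C1) $q_n(\mathsf e_i,x_1,\dots,x_n)=x_i$ ($1\le i\le n$); (C2) $q_n(\mathsf e_j,x_1,\dots,x_n)=\mathsf e_j$ ($j>n$); (C3) $q_n(x,\mathsf e_1,\dots,\mathsf e_n)=x$; (C4) $q_k(x,y_1,\dots,y_k)=q_n(x,y_1,\dots,y_k,\mathsf e_{k+1},\dots,\mathsf e_n)$ ($n>k$); (C5) $q_n(q_n(x,\mathbf y),\mathbf z)=q_n(x,q_n(y_1,\mathbf z),\dots,q_n(y_n,\mathbf z))$; (C6) $q_n(\sigma(x_1,\dots,x_k),\mathbf y)=\sigma(q_n(x_1,\mathbf y),\dots,q_n(x_k,\mathbf y))$ for $\sigma\in\tau$ of arity $k$. An element $a$ is independent of $\mathsf e_n$ if $q_n(a,\mathsf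 e_1,\dots,\mathsf e_{n-1},\mathsf e_{n+1})=a$; its dimension is the largest $n$ on which it depends ($0$ if none, infinite if infinitely many); $\mathbf C$ is finite dimensional if all elements have finite dimension. A function $f:C^k\to C$ is $\mathbf C$-representable if $f(\mathsf e_1,\dots,\mathsf e_k)$ has dimension $\le k$ and $f(a_1,\dots,a_k)=q_k(f(\mathsf e_1,\dots,\mathsf e_k),a_1,\dots,a_k)$ for all $a_i\in C$; $R_{\mathbf C}$ is the set of $\mathbf C$-representable functions. The type $\rho_{\mathbf C}$ has one operation symbol $\overline f$ of arity $k$ for each $k$-ary $f\in R_{\mathbf C}$; $\mathbf R_{\mathbf C}=(C,f)_{f\in R_{\mathbf C}}$ is the $\rho_{\mathbf C}$-algebra interpreting $\overline f$ as $f$; $\overline{\mathbf R}_{\mathbf C}=(\mathbf R_{\mathbf C},q_n^{\mathbf C},\mathsf e_i^{\mathbf C})$ is a clone $\rho_{\mathbf C}$-algebra. For a variety $\mathcal V$ of $\nu$-algebras with free algebra $\mathbf F_{\mathcal V}$ over the countable set $I=\{v_1,v_2,\dots\}$ of free generators, the clone $\mathcal V$-algebra is $(\mathbf F_{\mathcal V},q_n^{\mathbf F},\mathsf e_i^{\mathbf F})$ with $\mathsf e_i^{\mathbf F}=v_i$ and $q_n^{\mathbf F}(a,b_1,\dots,b_n)=s(a)$, where $s$ is the unique endomorphism of $\mathbf F_{\mathcal V}$ with $s(v_i)=b_i$ for $i\le n$ and $s(v_i)=v_i$ for $i>n$. *)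

theory Defs
  imports Main
begin

text \<open>The carrier C of the clone tau-algebra is the whole type 'a.
  A tau-signature is given by a type 's of operation symbols with arity function ar;
  sig interprets the symbols (on argument lists of the right length).
  q n a bs is q_n(a, b_1, ..., b_n) (with length bs = n), e i is e_i (i >= 1; e 0 unused).\<close>

definition es :: "(nat \<Rightarrow> 'a) \<Rightarrow> nat \<Rightarrow> 'a list" where
  "es e n = map e [1..<n+1]"

definition clone_alg ::
  "('s \<Rightarrow> nat) \<Rightarrow> ('s \<Rightarrow> 'a list \<Rightarrow> 'a) \<Rightarrow> (nat \<Rightarrow> 'a \<Rightarrow> 'a list \<Rightarrow> 'a) \<Rightarrow> (nat \<Rightarrow> 'a) \<Rightarrow> bool"
where
  "clone_alg ar sig q e \<longleftrightarrow>
     (\<forall>n xs i. length xs = n \<longrightarrow> 1 \<le> i \<longrightarrow> i \<le> n \<longrightarrow> q n (e i) xs = xs ! (i - 1)) \<and>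
     (\<forall>n xs j. length xs = n \<longrightarrow> n < j \<longrightarrow> q n (e j) xs = e j) \<and>
     (\<forall>n x. q n x (es e n) = x) \<and>
     (\<forall>k n x ys. length ys = k \<longrightarrow> k < n \<longrightarrow> q k x ys = q n x (ys @ map e [k+1..<n+1])) \<and>
     (\<forall>n x ys zs. length ys = n \<longrightarrow> length zs = n \<longrightarrow>
        q n (q n x ys) zs = q n x (map (\<lambda>y. q n y zs) ys)) \<and>
     (\<forall>n \<sigma> xs ys. length xs = ar \<sigma> \<longrightarrow> length ys = n \<longrightarrow>
        q n (sig \<sigma> xs) ys = sig \<sigma> (map (\<lambda>x. q n x ys) xs))"

definition independent :: "(nat \<Rightarrow> 'a \<Rightarrow> 'a list \<Rightarrow> 'a) \<Rightarrow> (nat \<Rightarrow> 'a) \<Rightarrow> 'a \<Rightarrow> nat \<Rightarrow> bool" where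
  "independent q e a n \<longleftrightarrow> q n a (map e [1..<n] @ [e (n+1)]) = a"

definition dim_le :: "(nat \<Rightarrow> 'a \<Rightarrow> 'a list \<Rightarrow> 'a) \<Rightarrow> (nat \<Rightarrow> 'a) \<Rightarrow> 'a \<Rightarrow> nat \<Rightarrow> bool" where
  "dim_le q e a k \<longleftrightarrow> (\<forall>n>k. independent q e a n)"

definition finite_dim :: "(nat \<Rightarrow> 'a \<Rightarrow> 'a list \<Rightarrow> 'a) \<Rightarrow> (nat \<Rightarrow> 'a) \<Rightarrow> bool" where
  "finite_dim q e \<longleftrightarrow> (\<forall>a. \<exists>k. dim_le q e a k)"

text \<open>A k-ary function C^k -> C is represented by f :: 'a list => 'a, extensionally
  normalised to undefined on lists of length different from k, so that each
  k-ary function corresponds to exactly one such f.\<close>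
definition representable :: "(nat \<Rightarrow> 'a \<Rightarrow> 'a list \<Rightarrow> 'a) \<Rightarrow> (nat \<Rightarrow> 'a) \<Rightarrow> nat \<Rightarrow> ('a list \<Rightarrow> 'a) \<Rightarrow> bool" where
  "representable q e k f \<longleftrightarrow>
     dim_le q e (f (es e k)) k \<and>
     (\<forall>xs. length xs = k \<longrightarrow> f xs = q k (f (es e k)) xs) \<and>
     (\<forall>xs. length xs \<noteq> k \<longrightarrow> f xs = undefined)"

text \<open>The type rho_C: one symbol (k, f) of arity k for every k-ary representable f,
  interpreted in R_C as f itself.\<close>
definition rho_syms :: "(nat \<Rightarrow> 'a \<Rightarrow> 'a list \<Rightarrow> 'a) \<Rightarrow> (nat \<Rightarrow> 'a) \<Rightarrow> (nat \<times> ('a list \<Rightarrow> 'a)) set" where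
  "rho_syms q e = {(k, f). representable q e k f}"

datatype 'f trm = Var nat | App 'f "'f trm list"

fun wf_trm :: "'f set \<Rightarrow> ('f \<Rightarrow> nat) \<Rightarrow> 'f trm \<Rightarrow> bool" where
  "wf_trm S ar (Var i) = True"
| "wf_trm S ar (App f ts) = (f \<in> S \<and> length ts = ar f \<and> (\<forall>t\<in>set ts. wf_trm S ar t))"

fun eval :: "('f \<Rightarrow> 'a list \<Rightarrow> 'a) \<Rightarrow> (nat \<Rightarrow> 'a) \<Rightarrow> 'f trm \<Rightarrow> 'a" where
  "eval I \<rho> (Var i) = \<rho> i"
| "eval I \<rho> (App f ts) = I f (map (eval I \<rho>) ts)"

fun subst :: "(nat \<Rightarrow> 'f trm) \<Rightarrow> 'f trm \<Rightarrow> 'f trm" where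
  "subst s (Var i) = s i"
| "subst s (App f ts) = App f (map (subst s) ts)"

text \<open>rho_C-terms over the countably infinite set of variables I = {v_1, v_2, ...};
  the variable v_i is represented as Var (i - 1).\<close>
definition rho_terms :: "(nat \<Rightarrow> 'a \<Rightarrow> 'a list \<Rightarrow> 'a) \<Rightarrow> (nat \<Rightarrow> 'a) \<Rightarrow> (nat \<times> ('a list \<Rightarrow> 'a)) trm set" where
  "rho_terms q e = {t. wf_trm (rho_syms q e) fst t}"

definition R_identity :: "(nat \<times> ('a list \<Rightarrow> 'a)) trm \<Rightarrow> (nat \<times> ('a list \<Rightarrow> 'a)) trm \<Rightarrow> bool" where
  "R_identity s t \<longleftrightarrow> (\<forall>\<rho>. eval snd \<rho> s = eval snd \<rho> t)"

text \<open>The free algebra F_V over I in V = Var(R_C) is the term algebra over I modulo the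
  fully invariant congruence of identities of R_C (= identities of V).
  free_iso q e h: h is a homomorphism of rho_C-algebras from the term algebra onto R_C whose
  kernel is exactly that congruence; equivalently h induces an isomorphism F_V \<cong> R_C.\<close>
definition free_iso :: "(nat \<Rightarrow> 'a \<Rightarrow> 'a list \<Rightarrow> 'a) \<Rightarrow> (nat \<Rightarrow> 'a) \<Rightarrow>
    ((nat \<times> ('a list \<Rightarrow> 'a)) trm \<Rightarrow> 'a) \<Rightarrow> bool" where
  "free_iso q e h \<longleftrightarrow>
     h ` rho_terms q e = UNIV \<and>
     (\<forall>s\<in>rho_terms q e. \<forall>t\<in>rho_terms q e. h s = h t \<longleftrightarrow> R_identity s t) \<and>
     (\<forall>k f ts. (k, f) \<in> rho_syms q e \<longrightarrow> length ts = k \<longrightarrow> set ts \<subseteq> rho_terms q e \<longrightarrow>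
        h (App (k, f) ts) = f (map h ts))"

text \<open>Substitution v_i := b_i for i <= n, v_i := v_i for i > n (variables shifted as above).\<close>
definition sub_n :: "'f trm list \<Rightarrow> nat \<Rightarrow> 'f trm" where
  "sub_n bs j = (if j < length bs then bs ! j else Var j)"

text \<open>Additionally h maps the clone operations of the clone V-algebra to those of
  the clone algebra R-bar_C: e_i^F = v_i and q_n^F(a, b_1..b_n) = s(a).\<close>
definition clone_iso :: "(nat \<Rightarrow> 'a \<Rightarrow> 'a list \<Rightarrow> 'a) \<Rightarrow> (nat \<Rightarrow> 'a) \<Rightarrow>
    ((nat \<times> ('a list \<Rightarrow> 'a)) trm \<Rightarrow> 'a) \<Rightarrow> bool" where
  "clone_iso q e h \<longleftrightarrow>
     (\<forall>i\<ge>1. h (Var (i - 1)) = e i) \<and>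
     (\<forall>n t bs. t \<in> rho_terms q e \<longrightarrow> length bs = n \<longrightarrow> set bs \<subseteq> rho_terms q e \<longrightarrow>
        h (subst (sub_n bs) t) = q n (h t) (map h bs))"

end

theory Submission
  imports Defs
begin

text \<open>Let h evaluate a rho_C-term at the generators, v_i \<mapsto> e_i.
  Since every symbol of rho_C acts as f(a_1, ..., a_k) = q_k(f(e_1, ..., e_k), a_1, ..., a_k),
  the axioms together with dim f(e_1, ..., e_k) <= k (which lets q pad or truncate argument lists) give,
  for every term t and every n bounding its variables and arities,
  t(a_1, ..., a_n) = q_n(h t, a_1, ..., a_n).
  Hence h t = h s already forces t = s to be an identity of R_C, and h commutes with
  substitution. Surjectivity is where finite dimension of C enters: an element a of
  dimension at most k is the value at e_1, ..., e_k of the representable function q_k(a, -).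
  Only (C1)-(C5) are used.\<close>

declare upt_Suc [simp del]

locale pure_clone_alg =
  fixes q :: "nat \<Rightarrow> 'a \<Rightarrow> 'a list \<Rightarrow> 'a" and e :: "nat \<Rightarrow> 'a"
  assumes q_e_proj: "\<And>n xs i. length xs = n \<Longrightarrow> 1 \<le> i \<Longrightarrow> i \<le> n \<Longrightarrow> q n (e i) xs = xs ! (i - 1)"
    and q_e_fixed: "\<And>n xs j. length xs = n \<Longrightarrow> n < j \<Longrightarrow> q n (e j) xs = e j"
    and q_es: "\<And>n x. q n x (es e n) = x"
    and q_extend_less:
      "\<And>k n x ys. length ys = k \<Longrightarrow> k < n \<Longrightarrow> q k x ys = q n x (ys @ map e [k+1..<n+1])"
    and q_q: "\<And>n x ys zs. length ys = n \<Longrightarrow> length zs = n \<Longrightarrow>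
      q n (q n x ys) zs = q n x (map (\<lambda>y. q n y zs) ys)"

lemma clone_alg_imp_pure_clone_alg: "clone_alg ar sig q e \<Longrightarrow> pure_clone_alg q e"
  unfolding clone_alg_def pure_clone_alg_def by (elim conjE) (intro conjI; assumption)

definition eval_gens :: "(nat \<Rightarrow> 'a) \<Rightarrow> (nat \<times> ('a list \<Rightarrow> 'a)) trm \<Rightarrow> 'a" where
  "eval_gens e = eval snd (\<lambda>i. e (Suc i))"

lemma eval_gens_Var [simp]: "eval_gens e (Var i) = e (Suc i)"
  by (simp add: eval_gens_def)

lemma eval_gens_App [simp]: "eval_gens e (App f ts) = snd f (map (eval_gens e) ts)"
  by (simp add: eval_gens_def)

fun trm_bound :: "(nat \<times> 'f) trm \<Rightarrow> nat" where
  "trm_bound (Var i) = Suc i"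
| "trm_bound (App f ts) = max (fst f) (sum_list (map trm_bound ts))"

lemma trm_bound_arg_le: "t \<in> set ts \<Longrightarrow> trm_bound t \<le> trm_bound (App f ts)"
  by (simp add: le_max_iff_disj member_le_sum_list)

lemma map_Suc_shift_upt: "map (\<lambda>i. f (Suc i)) [m..<n] = map f [Suc m..<Suc n]"
  unfolding map_Suc_upt[symmetric] by simp

lemma es_eq_map_upt: "es e n = map (\<lambda>i. e (Suc i)) [0..<n]"
  by (simp add: es_def map_Suc_shift_upt)

lemma length_es [simp]: "length (es e n) = n"
  by (simp add: es_def)

lemma eval_subst: "eval I \<rho> (subst s t) = eval I (\<lambda>i. eval I \<rho> (s i)) t"
  by (induction t) (auto cong: map_cong)

lemma map_sub_n_upt:
  assumes "length bs = n" "n \<le> m"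
  shows "map (\<lambda>i. g (sub_n bs i)) [0..<m] = map g bs @ map (\<lambda>i. g (Var i)) [n..<m]"
proof -
  have "[0..<m] = [0..<n] @ [n..<m]"
    using assms(2) by (metis le_add_diff_inverse upt_add_eq_append zero_le)
  moreover have "map (\<lambda>i. g (sub_n bs i)) [0..<n] = map g bs"
    by (rule nth_equalityI) (auto simp: assms(1) sub_n_def)
  moreover have "map (\<lambda>i. g (sub_n bs i)) [n..<m] = map (\<lambda>i. g (Var i)) [n..<m]"
    by (rule map_cong) (auto simp: assms(1) sub_n_def)
  ultimately show ?thesis by simp
qed

lemma representable_eq_q:
  assumes "representable q e k f" "length xs = k"
  shows "f xs = q k (f (es e k)) xs"
  using assms unfolding representable_def by blast

lemma representable_dim_le:
  "representable q e k f \<Longrightarrow> dim_le q e (f (es e k)) k"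
  unfolding representable_def by blast

context pure_clone_alg
begin

lemma q_extend:
  assumes "length ys = k" "k \<le> n"
  shows "q k x ys = q n x (ys @ map e [k+1..<n+1])"
  using assms q_extend_less[of ys k n x] by (cases "k = n") auto

lemma q_independent_drop_last:
  assumes ind: "independent q e c (Suc n)" and len: "length xs = n"
  shows "q (Suc n) c (xs @ [w]) = q n c xs"
proof -
  define ys where "ys = map e [1..<n+1] @ [e (n+2)]"
  have "q (Suc n) c (xs @ [w']) = q (Suc n) c (xs @ [e (n+2)])" for w'
  proof -
    have "map (\<lambda>y. q (Suc n) y (xs @ [w'])) ys = xs @ [e (n+2)]"
      by (rule nth_equalityI)
        (auto simp: ys_def len nth_append q_e_proj q_e_fixed)
    then have "q (Suc n) (q (Suc n) c ys) (xs @ [w']) = q (Suc n) c (xs @ [e (n+2)])"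
      using q_q[of ys "Suc n" "xs @ [w']" c] len by (simp add: ys_def)
    moreover have "q (Suc n) c ys = c"
      using ind unfolding independent_def ys_def by simp
    ultimately show ?thesis by simp
  qed
  moreover have "q n c xs = q (Suc n) c (xs @ [e (n+1)])"
    using q_extend[of xs n "Suc n" c] len by (simp add: upt_Suc)
  ultimately show ?thesis by metis
qed

lemma q_dim_le_drop:
  assumes dim: "dim_le q e c k" and "length zs = k" "k \<le> n" "length ws = n - k"
  shows "q n c (zs @ ws) = q k c zs"
  using assms(3,4)
proof (induction n arbitrary: ws)
  case (Suc n)
  show ?case
  proof (cases "k = Suc n")
    case False
    then have kn: "k \<le> n" using Suc.prems by simp
    then obtain ws' w where ws: "ws = ws' @ [w]"
      using Suc.prems(2) by (metis Suc_diff_le length_0_conv nat.distinct(1) rev_exhaust)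
    have "length ws' = n - k" using Suc.prems(2) ws kn by simp
    moreover have "independent q e c (Suc n)" using dim kn unfolding dim_le_def by simp
    ultimately have "q (Suc n) c ((zs @ ws') @ [w]) = q n c (zs @ ws')"
      using q_independent_drop_last[of c n "zs @ ws'" w] assms(2) kn by simp
    then show ?thesis using Suc.IH[OF kn] \<open>length ws' = n - k\<close> ws by simp
  qed (use Suc.prems in simp)
qed simp

lemma eval_eq_q_eval_gens:
  assumes "wf_trm (rho_syms q e) fst t" "trm_bound t \<le> n"
  shows "eval snd \<rho> t = q n (eval_gens e t) (map \<rho> [0..<n])"
  using assms
proof (induction t)
  case (Var i)
  then show ?case using q_e_proj[of "map \<rho> [0..<n]" n "Suc i"] by simp
next
  case (App f ts)
  obtain k g where f: "f = (k, g)" by force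
  let ?h = "eval_gens e"
  let ?as = "map \<rho> [0..<n]"
  define c where "c = g (es e k)"
  have rep: "representable q e k g" and len: "length ts = k"
    using App.prems f by (auto simp: rho_syms_def)
  have kn: "k \<le> n" using App.prems f by simp
  have g_q: "g xs = q k c xs" if "length xs = k" for xs
    using representable_eq_q[OF rep that] by (simp add: c_def)
  have "eval snd \<rho> t = q n (?h t) ?as" if "t \<in> set ts" for t
    using App.IH[OF that] App.prems that trm_bound_arg_le[OF that, of f] by simp
  then have IH: "map (eval snd \<rho>) ts = map (\<lambda>t. q n (?h t) ?as) ts"
    by (rule map_cong[OF refl])
  have "eval snd \<rho> (App f ts) = q k c (map (eval snd \<rho>) ts)"
    using f g_q len by simp
  also have "\<dots> = q k c (map (\<lambda>t. q n (?h t) ?as) ts)"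
    by (simp only: IH)
  also have "\<dots> = q n c (map (\<lambda>t. q n (?h t) ?as) ts @ map (\<lambda>y. q n y ?as) (map e [k+1..<n+1]))"
    using len kn
    by (intro q_dim_le_drop[OF representable_dim_le[OF rep], folded c_def, symmetric]) simp_all
  also have "\<dots> = q n c (map (\<lambda>y. q n y ?as) (map ?h ts @ map e [k+1..<n+1]))"
    by (simp add: comp_def)
  also have "\<dots> = q n (q k c (map ?h ts)) ?as"
    using q_q[of "map ?h ts @ map e [k+1..<n+1]" n ?as c] q_extend[of "map ?h ts" k n c] len kn
    by simp
  also have "\<dots> = q n (?h (App f ts)) ?as"
    using f g_q len by simp
  finally show ?case .
qed

lemma eval_gens_eq_iff_R_identity:
  assumes "s \<in> rho_terms q e" "t \<in> rho_terms q e"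
  shows "eval_gens e s = eval_gens e t \<longleftrightarrow> R_identity s t"
proof
  assume "eval_gens e s = eval_gens e t"
  then show "R_identity s t"
    using assms eval_eq_q_eval_gens[of _ "max (trm_bound s) (trm_bound t)"]
    unfolding R_identity_def rho_terms_def by simp
qed (simp add: R_identity_def eval_gens_def)

lemma representable_q_restrict:
  assumes "dim_le q e a k"
  shows "representable q e k (\<lambda>xs. if length xs = k then q k a xs else undefined)"
  using assms unfolding representable_def by (simp add: q_es)

lemma eval_gens_surj:
  assumes "finite_dim q e"
  shows "eval_gens e ` rho_terms q e = UNIV"
proof (intro set_eqI iffI)
  fix a :: 'a
  obtain k where "dim_le q e a k" using assms unfolding finite_dim_def by blast
  define g where "g = (\<lambda>xs. if length xs = k then q k a xs else undefined)"
  have "representable q e k g"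
    unfolding g_def by (rule representable_q_restrict) fact
  then have "App (k, g) (map Var [0..<k]) \<in> rho_terms q e"
    by (auto simp: rho_terms_def rho_syms_def)
  moreover have "eval_gens e (App (k, g) (map Var [0..<k])) = a"
    by (simp add: g_def comp_def q_es flip: es_eq_map_upt)
  ultimately show "a \<in> eval_gens e ` rho_terms q e" by force
qed simp

lemma free_iso_eval_gens:
  assumes "finite_dim q e"
  shows "free_iso q e (eval_gens e)"
  unfolding free_iso_def
  using eval_gens_surj[OF assms] eval_gens_eq_iff_R_identity by simp

lemma eval_gens_subst:
  assumes t: "t \<in> rho_terms q e" and len: "length bs = n"
  shows "eval_gens e (subst (sub_n bs) t) = q n (eval_gens e t) (map (eval_gens e) bs)"
proof -
  define m where "m = max (trm_bound t) n"
  have "eval_gens e (subst (sub_n bs) t) = eval snd (\<lambda>i. eval_gens e (sub_n bs i)) t"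
    by (simp add: eval_gens_def eval_subst)
  also have "\<dots> = q m (eval_gens e t) (map (\<lambda>i. eval_gens e (sub_n bs i)) [0..<m])"
    using eval_eq_q_eval_gens t unfolding rho_terms_def m_def by simp
  also have "map (\<lambda>i. eval_gens e (sub_n bs i)) [0..<m] = map (eval_gens e) bs @ map e [n+1..<m+1]"
    using map_sub_n_upt[OF len, of m "eval_gens e"]
    by (simp add: m_def map_Suc_shift_upt)
  also have "q m (eval_gens e t) \<dots> = q n (eval_gens e t) (map (eval_gens e) bs)"
    using q_extend[of "map (eval_gens e) bs" n m] len by (simp add: m_def)
  finally show ?thesis .
qed

lemma clone_iso_eval_gens: "clone_iso q e (eval_gens e)"
  unfolding clone_iso_def by (simp add: eval_gens_subst)

end

theorem theorem10p5:
  fixes ar :: "'s \<Rightarrow> nat" and sig :: "'s \<Rightarrow> 'a list \<Rightarrow> 'a"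
    and q :: "nat \<Rightarrow> 'a \<Rightarrow> 'a list \<Rightarrow> 'a" and e :: "nat \<Rightarrow> 'a"
  assumes "clone_alg ar sig q e"
    and "finite_dim q e"
  shows "(\<exists>h. free_iso q e h) \<and> (\<exists>h. free_iso q e h \<and> clone_iso q e h)"
proof -
  interpret pure_clone_alg q e
    using assms(1) by (rule clone_alg_imp_pure_clone_alg)
  show ?thesis
    using free_iso_eval_gens[OF assms(2)] clone_iso_eval_gens by blast
qed

end
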